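(* Let $\mathcal{A}=\{m\ge 1:\ c_m=1\}$. A positive integer $n$ belongs to $\mathcal{A}$ if and only if, in the base-$4$ expansion of $n+1$, every digit other than the last (least significant) one is $0$ or $2$; equivalently, the binary digits of $n+1$ at positions $2k$ (i.e. with weight $2^{2k}$) are $0$ for all $k\ge 1$.
   Context: For $n\in\mathbb{N}$ let $s_2(n)$ be the sum of the binary digits of $n$ and $t_n=s_2(n)\bmod 2$ (the Prouhet–Thue–Morse sequence). Let $F(X)=\sum_{n\ge1}t_nX^n\in\mathbb{F}_2[[X]]$ and let $G(X)=\sum_{n\ge1}c_nX^n\in\mathbb{F}_2[[X]]$ be its compositional inverse, i.e. $F(G(X))=G(F(X))=X$. The $c_n$ are identified with integers in $\{0,1\}$. *)

theory Defs
  imports "HOL-Computational_Algebra.Formal_Power_Series" "HOL-Library.Z2"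
begin

fun s2 :: "nat \<Rightarrow> nat" where
  "s2 n = (if n = 0 then 0 else n mod 2 + s2 (n div 2))"

declare s2.simps[simp del]

definition tm :: "nat \<Rightarrow> nat" where
  "tm n = s2 n mod 2"

definition F_TM :: "bit fps" where
  "F_TM = Abs_fps (\<lambda>n. if n \<ge> 1 then of_nat (tm n) else 0)"

definition G_TM :: "bit fps" where
  "G_TM = fps_inv F_TM"

end

theory Submission
  imports Defs
begin

unbundle fps_syntax

text \<open>
  Over GF(2), t(2m) = t(m), t(2m+1) = 1 + t(m) and F(X)^2 = F(X^2) give
  (1 + X^2) F = (1 + X)^3 F^2 + X, so substituting X := G shows that G is a root of
  P(Y) = (1 + Y)^3 X^2 + (1 + Y)^2 X + Y. This root is unique: P(Y) - P(Z) is Y - Z times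
  a series with constant term 1.

  The series D of all a whose base-4 digits lie in {0, 2} satisfies D = (1 + X^2) D^4 by
  Frobenius, i.e. (1 + X)^2 D^3 = 1, so H = (1 + X) D is a cube root of 1 + X. The coefficient
  of X^m in H records whether m div 4 has such digits, so H = 1 + X (1 + Y) where the n-th
  coefficient of Y (n \<ge> 1) records whether (n + 1) div 4 has them; expanding H^3 = 1 + X then
  gives P(Y) = 0, hence G = Y.
\<close>

lemma sum_symmetric_char_2:
  fixes h :: "nat \<Rightarrow> nat \<Rightarrow> 'a::comm_ring_1"
  assumes char_2: "(2::'a) = 0" and sym: "\<And>i j. h i j = h j i"
  shows "(\<Sum>i=0..n. h i (n - i)) = (if even n then h (n div 2) (n div 2) else 0)"
proof -
  define L where "L = {i. 2 * i < n}"
  define M where "M = {i. 2 * i = n}"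
  define R where "R = {i. n < 2 * i \<and> i \<le> n}"
  have split: "{0..n} = L \<union> M \<union> R" and fin: "finite L" "finite M" "finite R"
    by (auto simp: L_def M_def R_def intro: finite_subset[of _ "{..n}"])
  have "sum (\<lambda>i. h i (n - i)) R = sum (\<lambda>i. h i (n - i)) L"
    by (rule sum.reindex_bij_witness[where i="\<lambda>i. n - i" and j="\<lambda>i. n - i"])
      (auto simp: L_def R_def sym)
  then have "(\<Sum>i=0..n. h i (n - i)) = 2 * sum (\<lambda>i. h i (n - i)) L + sum (\<lambda>i. h i (n - i)) M"
    unfolding split using fin
    by (simp add: sum.union_disjoint L_def M_def R_def Int_Un_distrib2 disjoint_iff)
  moreover have "M = (if even n then {n div 2} else {})"
    by (auto simp: M_def)
  ultimately show ?thesis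
    using char_2 by (auto elim!: evenE)
qed

lemma fps_square_nth_char_2:
  fixes A :: "'a::comm_ring_1 fps"
  assumes "(2::'a) = 0"
  shows "(A^2) $ n = (if even n then (A $ (n div 2))^2 else 0)"
  using sum_symmetric_char_2[of "\<lambda>i j. A $ i * A $ j" n] assms
  by (simp add: power2_eq_square fps_mult_nth mult.commute)

lemma square_add_char_2:
  fixes a b :: "'a::comm_ring_1"
  assumes "(2::'a) = 0"
  shows "(a + b)^2 = a^2 + b^2"
  using assms by (simp add: power2_sum)

lemma cube_add_char_2:
  fixes a b :: "'a::comm_ring_1"
  assumes "(2::'a) = 0"
  shows "(a + b)^3 = a^3 + a^2 * b + a * b^2 + b^3"
proof -
  have "(a + b)^3 = (a + b) * (a^2 + b^2)"
    using square_add_char_2[OF assms] by (simp add: power3_eq_cube power2_eq_square)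
  then show ?thesis
    by (simp add: algebra_simps power2_eq_square power3_eq_cube)
qed

lemma fps_bit_2_eq_0 [simp]: "(2::bit fps) = 0"
  by (simp add: numeral_fps_const)

lemma one_plus_X_square_bit: "(1 + fps_X)^2 = (1 + fps_X^2 :: bit fps)"
  using square_add_char_2[of "1 :: bit fps" fps_X] by simp

lemma fps_power4_nth_bit: "((A::bit fps)^4) $ n = (if n mod 4 = 0 then A $ (n div 4) else 0)"
proof -
  have "(A^4) $ n = ((A^2)^2) $ n"
    by (simp flip: power_mult)
  also have "\<dots> = (if even n \<and> even (n div 2) then A $ (n div 2 div 2) else 0)"
    by (simp only: fps_square_nth_char_2[OF bit_2_eq_0]) simp
  also have "\<dots> = (if n mod 4 = 0 then A $ (n div 4) else 0)"
    by (auto simp: div_div_eq_right)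
  finally show ?thesis .
qed

definition base4_digits_02 :: "nat \<Rightarrow> bool" where
  "base4_digits_02 a \<longleftrightarrow> (\<forall>k. a div 4^k mod 4 \<in> {0, 2})"

lemma base4_digits_02_div_4_iff:
  "base4_digits_02 (a div 4) \<longleftrightarrow> (\<forall>k\<ge>1. a div 4^k mod 4 \<in> {0, 2})"
proof -
  have "(\<forall>j. P (Suc j)) \<longleftrightarrow> (\<forall>k\<ge>1. P k)" for P :: "nat \<Rightarrow> bool"
    by (auto dest: Suc_le_D)
  from this[of "\<lambda>k. a div 4^k mod 4 \<in> {0, 2}"] show ?thesis
    by (simp add: base4_digits_02_def div_mult2_eq)
qed

lemma base4_digits_02_iff:
  "base4_digits_02 a \<longleftrightarrow> a mod 4 \<in> {0, 2} \<and> base4_digits_02 (a div 4)"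
proof -
  have "(\<forall>k. P k) \<longleftrightarrow> P 0 \<and> (\<forall>k\<ge>1. P k)" for P :: "nat \<Rightarrow> bool"
    by (metis One_nat_def not_less_eq_eq le_zero_eq)
  from this[of "\<lambda>k. a div 4^k mod 4 \<in> {0, 2}"] show ?thesis
    unfolding base4_digits_02_div_4_iff by (simp add: base4_digits_02_def)
qed

definition base4_digits_02_fps :: "bit fps" where
  "base4_digits_02_fps = Abs_fps (\<lambda>a. of_bool (base4_digits_02 a))"

lemma base4_digits_02_fps_nth_0 [simp]: "base4_digits_02_fps $ 0 = 1"
  by (simp add: base4_digits_02_fps_def base4_digits_02_def)

lemma base4_digits_02_fps_nth:
  "base4_digits_02_fps $ k = of_bool (k mod 4 \<in> {0, 2} \<and> base4_digits_02 (k div 4))"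
  using base4_digits_02_iff[of k] by (simp add: base4_digits_02_fps_def)

lemma base4_digits_02_fps_power4_nth:
  "(base4_digits_02_fps^4) $ n = of_bool (n mod 4 = 0 \<and> base4_digits_02 (n div 4))"
  by (simp add: fps_power4_nth_bit base4_digits_02_fps_def)

lemma base4_digits_02_fps_eq: "base4_digits_02_fps = (1 + fps_X^2) * base4_digits_02_fps^4"
proof (rule fps_ext)
  fix n :: nat
  let ?D = base4_digits_02_fps
  have shifted: "(if n < 2 then 0 else (?D^4) $ (n - 2))
      = of_bool (n mod 4 = 2 \<and> base4_digits_02 (n div 4))"
  proof (cases "n < 2")
    case False
    then have "(n - 2) mod 4 = 0 \<longleftrightarrow> n mod 4 = 2"
      and "n mod 4 = 2 \<Longrightarrow> (n - 2) div 4 = n div 4"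
      by presburger+
    with False show ?thesis
      by (simp add: base4_digits_02_fps_power4_nth)
  qed auto
  have "((1 + fps_X^2) * ?D^4) $ n = (?D^4) $ n + (if n < 2 then 0 else (?D^4) $ (n - 2))"
    by (simp add: distrib_right fps_X_power_mult_nth)
  also have "\<dots> = of_bool (n mod 4 = 0 \<and> base4_digits_02 (n div 4))
      + of_bool (n mod 4 = 2 \<and> base4_digits_02 (n div 4))"
    unfolding shifted by (simp only: base4_digits_02_fps_power4_nth)
  also have "\<dots> = ?D $ n"
    using base4_digits_02_iff[of n] by (auto simp: base4_digits_02_fps_def)
  finally show "?D $ n = ((1 + fps_X^2) * ?D^4) $ n" ..
qed

lemma base4_digits_02_fps_cube: "(1 + fps_X)^2 * base4_digits_02_fps^3 = 1"
proof -
  let ?D = base4_digits_02_fps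
  have "?D * ((1 + fps_X)^2 * ?D^3) = (1 + fps_X^2) * ?D^4"
    unfolding one_plus_X_square_bit by (simp add: eval_nat_numeral ac_simps)
  also have "\<dots> = ?D * 1"
    using base4_digits_02_fps_eq by simp
  finally have "?D * ((1 + fps_X)^2 * ?D^3) = ?D * 1" .
  moreover have "?D \<noteq> 0"
    by (metis base4_digits_02_fps_nth_0 fps_zero_nth zero_neq_one)
  ultimately show ?thesis
    by simp
qed

lemma one_plus_X_times_base4_digits_02_fps_nth:
  "((1 + fps_X) * base4_digits_02_fps) $ m = of_bool (base4_digits_02 (m div 4))"
proof (cases m)
  case 0
  then show ?thesis
    by (simp add: base4_digits_02_def)
next
  case (Suc k)
  have "((1 + fps_X) * base4_digits_02_fps) $ Suc k
      = base4_digits_02_fps $ Suc k + base4_digits_02_fps $ k"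
    by (simp add: distrib_right fps_X_mult_nth)
  also have "\<dots> = of_bool (Suc k mod 4 \<in> {0, 2} \<and> base4_digits_02 (Suc k div 4))
      + of_bool (k mod 4 \<in> {0, 2} \<and> base4_digits_02 (k div 4))"
    by (simp only: base4_digits_02_fps_nth)
  also have "\<dots> = of_bool (base4_digits_02 (Suc k div 4))"
  proof -
    have "Suc k mod 4 \<in> {0, 2} \<longleftrightarrow> k mod 4 \<notin> {0, 2}"
      using mod_less_divisor[of 4 k] by (simp add: mod_Suc) arith
    moreover have "k mod 4 \<in> {0, 2} \<Longrightarrow> Suc k div 4 = k div 4"
      by (auto simp: div_Suc mod_Suc)
    ultimately show ?thesis
      by (cases "k mod 4 \<in> {0, 2}") simp_all
  qed
  finally show ?thesis
    using Suc by simp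
qed

lemma one_plus_X_times_base4_digits_02_fps_cube:
  "((1 + fps_X) * base4_digits_02_fps)^3 = 1 + fps_X"
proof -
  have "((1 + fps_X) * base4_digits_02_fps)^3
      = (1 + fps_X) * ((1 + fps_X)^2 * base4_digits_02_fps^3)"
    by (simp add: power_mult_distrib eval_nat_numeral ac_simps)
  then show ?thesis
    by (simp add: base4_digits_02_fps_cube)
qed

definition G_digits :: "bit fps" where
  "G_digits = Abs_fps (\<lambda>n. of_bool (1 \<le> n \<and> base4_digits_02 ((n + 1) div 4)))"

lemma one_plus_X_times_one_plus_G_digits:
  "1 + fps_X * (1 + G_digits) = (1 + fps_X) * base4_digits_02_fps"
proof (rule fps_ext)
  fix m :: nat
  consider "m = 0" | "m = 1" | "m \<ge> 2"
    by linarith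
  then show "(1 + fps_X * (1 + G_digits)) $ m = ((1 + fps_X) * base4_digits_02_fps) $ m"
    unfolding one_plus_X_times_base4_digits_02_fps_nth
    by cases (auto simp: fps_X_mult_nth G_digits_def base4_digits_02_def)
qed

definition tm_inv_poly :: "bit fps \<Rightarrow> bit fps" where
  "tm_inv_poly Y = (1 + Y)^3 * fps_X^2 + (1 + Y)^2 * fps_X + Y"

lemma tm_inv_poly_inj:
  assumes "tm_inv_poly Y = tm_inv_poly Z"
  shows "Y = Z"
proof -
  define U where
    "U = 1 + fps_X * ((2 + Y + Z) + fps_X * ((1 + Y)^2 + (1 + Y) * (1 + Z) + (1 + Z)^2))"
  have "tm_inv_poly Y - tm_inv_poly Z = (Y - Z) * U"
    unfolding tm_inv_poly_def U_def by algebra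
  moreover have "U $ 0 = 1"
    by (simp add: U_def)
  then have "U \<noteq> 0"
    by auto
  ultimately show ?thesis
    using assms by simp
qed

lemma tm_inv_poly_G_digits: "tm_inv_poly G_digits = 0"
proof -
  define V where "V = fps_X * (1 + G_digits)"
  have "(1 + V)^3 = 1 + fps_X"
    unfolding V_def one_plus_X_times_one_plus_G_digits
    by (rule one_plus_X_times_base4_digits_02_fps_cube)
  then have "1 + V + V^2 + V^3 = 1 + fps_X"
    by (simp add: cube_add_char_2)
  then have "V^3 + V^2 + V + fps_X = 0"
    by (simp add: algebra_simps)
  moreover have "fps_X * tm_inv_poly G_digits = V^3 + V^2 + V + fps_X"
    unfolding tm_inv_poly_def V_def by (simp add: algebra_simps eval_nat_numeral)
  ultimately show ?thesis
    by simp
qed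

lemma s2_double: "s2 (2 * m) = s2 m"
  by (cases "m = 0") (simp_all add: s2.simps[of "2 * m"])

lemma s2_Suc_double: "s2 (Suc (2 * m)) = Suc (s2 m)"
  by (subst s2.simps) simp

lemma F_TM_nth: "F_TM $ n = of_nat (s2 n)"
proof -
  have "(of_nat (k mod 2) :: bit) = of_nat k" for k
    by (metis of_nat_add of_nat_mult mod_mult_div_eq bit_2_eq_0 mult_zero_left add_0_right
        of_nat_numeral)
  then show ?thesis
    by (cases "n = 0") (simp_all add: F_TM_def tm_def s2.simps[of 0])
qed

lemma F_TM_split: "F_TM = (1 + fps_X) * F_TM^2 + fps_X * Abs_fps (\<lambda>n. of_bool (even n))"
proof (rule fps_ext)
  fix n :: nat
  have sq: "(F_TM^2) $ k = (if even k then F_TM $ (k div 2) else 0)" for k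
    by (simp add: fps_square_nth_char_2)
  show "F_TM $ n = ((1 + fps_X) * F_TM^2 + fps_X * Abs_fps (\<lambda>n. of_bool (even n))) $ n"
  proof (cases n rule: parity_cases)
    case even
    then obtain m where n: "n = 2 * m" by blast
    have "n = 0 \<or> odd (n - 1)"
      using even by presburger
    then show ?thesis
      using n by (auto simp: distrib_right fps_X_mult_nth sq F_TM_nth s2_double s2.simps[of 0])
  next
    case odd
    then obtain m where "n = Suc (2 * m)" by (metis oddE add.commute plus_1_eq_Suc)
    then show ?thesis
      by (simp add: distrib_right fps_X_mult_nth sq F_TM_nth s2_double s2_Suc_double)
  qed
qed

lemma F_TM_functional_eq: "(1 + fps_X^2) * F_TM = (1 + fps_X)^3 * F_TM^2 + fps_X"
proof -
  define E :: "bit fps" where "E = Abs_fps (\<lambda>n. of_bool (even n))"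
  have "(1 + fps_X^2) * E = 1"
    by (rule fps_ext) (auto simp: E_def distrib_right fps_X_power_mult_nth)
  moreover have "(1 + fps_X^2) * (1 + fps_X) = (1 + fps_X :: bit fps)^3"
    unfolding one_plus_X_square_bit[symmetric] by (simp add: power2_eq_square power3_eq_cube)
  moreover have "(1 + fps_X^2) * F_TM
      = ((1 + fps_X^2) * (1 + fps_X)) * F_TM^2 + fps_X * ((1 + fps_X^2) * E)"
    by (subst F_TM_split) (simp only: E_def algebra_simps)
  ultimately show ?thesis
    by simp
qed

lemma tm_inv_poly_G_TM: "tm_inv_poly G_TM = 0"
proof -
  have F_0: "F_TM $ 0 = 0" and F_1: "F_TM $ 1 \<noteq> 0"
    by (simp_all add: F_TM_nth s2.simps)
  have G_0: "G_TM $ 0 = 0"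
    by (simp add: G_TM_def fps_inv_def)
  have "F_TM oo G_TM = fps_X"
    unfolding G_TM_def using F_0 F_1 by (rule fps_inv_right)
  then have "((1 + fps_X^2) * F_TM) oo G_TM = (1 + G_TM^2) * fps_X"
    and "((1 + fps_X)^3 * F_TM^2 + fps_X) oo G_TM = (1 + G_TM)^3 * fps_X^2 + G_TM"
    using G_0 by (simp_all add: fps_compose_add_distrib fps_compose_mult_distrib
        flip: fps_compose_power)
  then have "(1 + G_TM^2) * fps_X = (1 + G_TM)^3 * fps_X^2 + G_TM"
    using F_TM_functional_eq by metis
  then show ?thesis
    unfolding tm_inv_poly_def using square_add_char_2[of "1 :: bit fps" G_TM]
    by (simp add: algebra_simps)
qed

lemma G_TM_eq_G_digits: "G_TM = G_digits"
  using tm_inv_poly_inj tm_inv_poly_G_TM tm_inv_poly_G_digits by simp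

theorem mainTheorem4:
  fixes n :: nat
  assumes "n \<ge> 1"
  shows "(fps_nth G_TM n = 1 \<longleftrightarrow> (\<forall>k\<ge>1. (n + 1) div 4 ^ k mod 4 \<in> {0, 2}))
       \<and> ((\<forall>k\<ge>1. (n + 1) div 4 ^ k mod 4 \<in> {0, 2})
            \<longleftrightarrow> (\<forall>k\<ge>1. (n + 1) div 2 ^ (2 * k) mod 2 = 0))"
proof
  show "G_TM $ n = 1 \<longleftrightarrow> (\<forall>k\<ge>1. (n + 1) div 4 ^ k mod 4 \<in> {0, 2})"
    using assms by (simp add: G_TM_eq_G_digits G_digits_def base4_digits_02_div_4_iff)
  have "d mod 4 \<in> {0, 2} \<longleftrightarrow> d mod 2 = 0" for d :: nat
    by (simp only: insert_iff empty_iff) presburger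
  then show "(\<forall>k\<ge>1. (n + 1) div 4 ^ k mod 4 \<in> {0, 2})
      \<longleftrightarrow> (\<forall>k\<ge>1. (n + 1) div 2 ^ (2 * k) mod 2 = 0)"
    by (simp add: power_mult)
qed

end
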